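(* Let $n=a+b$ with $a,b\ge1$, let $\lambda$ be the standard (invariant) volume measure on the Grassmannian $G(n,a)$ of $a$-dimensional linear subspaces of $\mathbb R^n$, and let $\mu$ be a finite positive Borel measure on $G(n,b)$. Then \[ \lambda\Big(\big\{E\in G(n,a):\ \mu(\{F\in G(n,b):E\not\pitchfork F\})>0\big\}\Big)=0 . \]
   Context: $E\pitchfork F$ (transversal) means $E+F=\mathbb R^n$, equivalently (as $\dim E+\dim F=n$) $E\cap F=\{0\}$; $E\not\pitchfork F$ means they are not transversal. *)

theory Defs
  imports "HOL-Probability.Probability"
begin

definition grass :: "nat \<Rightarrow> (real^'n) set set" where
  "grass k = {E. subspace E \<and> dim E = k}"

definition proj_mat :: "(real^'n) set \<Rightarrow> real^'n^'n" where
  "proj_mat E = matrix (closest_point E)"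

text \<open>Borel structure on G(n,k): the standard topology of the Grassmannian is the one
  induced by the (injective) embedding E \<mapsto> orthogonal projection onto E.\<close>
definition grass_borel :: "nat \<Rightarrow> (real^'n) set measure" where
  "grass_borel k = vimage_algebra (grass k) proj_mat borel"

definition transversal :: "(real^'n) set \<Rightarrow> (real^'n) set \<Rightarrow> bool" where
  "transversal E F \<longleftrightarrow> {x + y | x y. x \<in> E \<and> y \<in> F} = UNIV"

definition gauss_vec :: "(real^'n) measure" where
  "gauss_vec = density lborel (\<lambda>x. ennreal (\<Prod>i\<in>UNIV. std_normal_density (x $ i)))"

text \<open>Span of an a-tuple of vectors; degenerate (measure-zero) tuples are sent to a fixed point.\<close>
definition tuple_span :: "nat \<Rightarrow> (nat \<Rightarrow> real^'n) \<Rightarrow> (real^'n) set" where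
  "tuple_span k v = (if dim (span (v ` {..<k})) = k then span (v ` {..<k})
                     else (SOME E. E \<in> grass k))"

text \<open>The standard O(n)-invariant probability measure on G(n,k): the law of the span of
  k independent standard Gaussian vectors in R^n.\<close>
definition grass_measure :: "nat \<Rightarrow> (real^'n) set measure" where
  "grass_measure k = distr (PiM {..<k} (\<lambda>_. gauss_vec)) (grass_borel k) (tuple_span k)"

end

(*
  The invariant measure on G(n,a) is the law of span(v_0, ..., v_(a-1)) for independent
  standard Gaussian vectors v_i. Fix F in G(n,b). A span E of the v_i fails to be transversal
  to F exactly when some unit vector of the a-dimensional space F^perp is orthogonal to all
  v_i. A Gaussian vector lies in a given hyperplane with probability zero, so induction on the
  number of vectors shows that this happens only for a null set of tuples. By Fubini on the
  product of the tuple space with mu, for almost every tuple the set of F not transversal to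
  its span is mu-null, which is the claim pulled back along the span map.

  All sets involved are measurable by one observation: if H w y is continuous in y and
  measurable in w, then {w. H w y = 0 for some unit y} is measurable, since by compactness of
  the sphere it is a countable intersection of countable unions over a dense set of y.
*)

theory Submission
  imports Defs
begin

section \<open>Orthogonal projections and transversality\<close>

lemma closest_point_subspace_orthogonal:
  fixes S :: "'a::euclidean_space set"
  assumes S: "subspace S" and s: "s \<in> S"
  shows "(x - closest_point S x) \<bullet> s = 0"
proof -
  have cl: "closed S" and cv: "convex S" and ne: "S \<noteq> {}"
    using S closed_subspace subspace_imp_convex subspace_0 by auto
  let ?c = "closest_point S x"
  have c: "?c \<in> S" using closest_point_in_set[OF cl ne] .
  have "(x - ?c) \<bullet> ((?c + s) - ?c) \<le> 0"
    using c s S by (intro closest_point_dot[OF cv cl]) (simp add: subspace_add)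
  moreover have "(x - ?c) \<bullet> ((?c - s) - ?c) \<le> 0"
    using c s S by (intro closest_point_dot[OF cv cl]) (simp add: subspace_diff)
  ultimately show ?thesis by (simp add: inner_minus_right)
qed

lemma closest_point_subspace_eqI:
  fixes S :: "'a::euclidean_space set"
  assumes S: "subspace S" and p: "p \<in> S" and orth: "\<And>s. s \<in> S \<Longrightarrow> (x - p) \<bullet> s = 0"
  shows "closest_point S x = p"
proof -
  let ?d = "closest_point S x - p"
  have "?d \<in> S"
    using S p closest_point_in_set[OF closed_subspace[OF S]] subspace_0[OF S] subspace_diff by blast
  then have "?d \<bullet> ?d = (x - p) \<bullet> ?d - (x - closest_point S x) \<bullet> ?d"
    by (simp add: inner_diff_left)
  also have "\<dots> = 0" using orth closest_point_subspace_orthogonal[OF S] \<open>?d \<in> S\<close> by simp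
  finally show ?thesis by simp
qed

lemma linear_closest_point_subspace:
  fixes S :: "'a::euclidean_space set"
  assumes S: "subspace S"
  shows "linear (closest_point S)"
proof
  have c: "closest_point S x \<in> S" for x
    using closest_point_in_set[OF closed_subspace[OF S]] subspace_0[OF S] by blast
  note orth = closest_point_subspace_orthogonal[OF S]
  show "closest_point S (x + y) = closest_point S x + closest_point S y" for x y
    using c S orth[of _ x] orth[of _ y]
    by (intro closest_point_subspace_eqI) (auto simp: subspace_add algebra_simps inner_diff_left inner_add_left)
  show "closest_point S (r *\<^sub>R x) = r *\<^sub>R closest_point S x" for r x
    using c S orth[of _ x]
    by (intro closest_point_subspace_eqI) (auto simp: subspace_scale inner_diff_left)
qed

lemma proj_mat_mult_vec:
  assumes "subspace S"
  shows "proj_mat S *v x = closest_point S x"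
  using linear_closest_point_subspace[OF assms] by (simp add: proj_mat_def matrix_works)

lemma proj_mat_mult_vec_eq_0_iff:
  assumes S: "subspace S"
  shows "proj_mat S *v x = 0 \<longleftrightarrow> (\<forall>s\<in>S. s \<bullet> x = 0)"
  using closest_point_subspace_orthogonal[OF S, of _ x]
    closest_point_subspace_eqI[OF S subspace_0[OF S], of x]
  by (auto simp: proj_mat_mult_vec[OF S] inner_commute)

definition common_normal :: "'a::real_inner set \<Rightarrow> 'a set \<Rightarrow> bool" where
  "common_normal A B \<longleftrightarrow> (\<exists>y. norm y = 1 \<and> (\<forall>x\<in>A. x \<bullet> y = 0) \<and> (\<forall>x\<in>B. x \<bullet> y = 0))"

lemma not_transversal_iff_common_normal:
  fixes E F :: "(real^'n) set"
  assumes E: "subspace E" and F: "subspace F"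
  shows "\<not> transversal E F \<longleftrightarrow> common_normal E F"
  unfolding common_normal_def
proof
  define W where "W = {x + y | x y. x \<in> E \<and> y \<in> F}"
  assume "\<not> transversal E F"
  then have "W \<noteq> UNIV" by (simp add: W_def transversal_def)
  moreover have "span W = W"
    unfolding span_eq_iff W_def by (rule subspace_sums[OF E F])
  ultimately have "span W \<noteq> UNIV" by (simp only: not_False_eq_True)
  then have "dim W < DIM(real^'n)"
    using dim_subset_UNIV[of W] dim_eq_full[of W] by linarith
  then obtain z where z: "z \<noteq> 0" "\<And>w. w \<in> span W \<Longrightarrow> orthogonal z w"
    using orthogonal_to_subspace_exists by blast
  have "w \<bullet> (z /\<^sub>R norm z) = 0" if "w \<in> W" for w
    using z(2)[OF span_base[OF that]] by (simp add: orthogonal_def inner_commute)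
  moreover have "E \<subseteq> W" "F \<subseteq> W"
    unfolding W_def using subspace_0[OF E] subspace_0[OF F] by force+
  ultimately show "\<exists>y. norm y = 1 \<and> (\<forall>e\<in>E. e \<bullet> y = 0) \<and> (\<forall>f\<in>F. f \<bullet> y = 0)"
    using z(1) by (intro exI[of _ "z /\<^sub>R norm z"]) auto
next
  assume "\<exists>y. norm y = 1 \<and> (\<forall>e\<in>E. e \<bullet> y = 0) \<and> (\<forall>f\<in>F. f \<bullet> y = 0)"
  then obtain y where y: "norm y = 1" "\<forall>e\<in>E. e \<bullet> y = 0" "\<forall>f\<in>F. f \<bullet> y = 0" by blast
  show "\<not> transversal E F"
  proof
    assume "transversal E F"
    then obtain e f where "y = e + f" "e \<in> E" "f \<in> F"
      unfolding transversal_def by blast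
    then have "y \<bullet> y = 0" using y by (simp add: inner_add_left)
    then show False using y(1) by simp
  qed
qed

lemma not_transversal_if_dim_add_less:
  fixes E F :: "(real^'n) set"
  assumes E: "subspace E" and F: "subspace F" and dim: "dim E + dim F < CARD('n)"
  shows "\<not> transversal E F"
proof
  assume "transversal E F"
  then have "dim (UNIV :: (real^'n) set) \<le> dim E + dim F"
    using dim_sums_Int[OF E F] unfolding transversal_def by simp
  then show False using dim by simp
qed

lemma tuple_span_not_transversal_imp_common_normal:
  fixes v :: "nat \<Rightarrow> real^'n"
  assumes ab: "a + b \<le> CARD('n)" and F: "F \<in> grass b" and nt: "\<not> transversal (tuple_span a v) F"
  shows "common_normal (v ` {..<a}) F"
proof -
  define V where "V = span (v ` {..<a})"
  have sF: "subspace F" using F by (simp add: grass_def)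
  have "\<not> transversal V F"
  proof (cases "dim V = a")
    case True
    then show ?thesis using nt by (simp add: tuple_span_def V_def)
  next
    case False
    \<comment> \<open>Then \<open>tuple_span a v\<close> is an arbitrary point of \<open>grass a\<close>,
      but \<open>V\<close> itself is too small to be transversal to \<open>F\<close>.\<close>
    have "dim V \<le> a"
      unfolding V_def using dim_le_card'[of "v ` {..<a}"] card_image_le[of "{..<a}" v] by simp
    then show ?thesis
      using False ab F by (intro not_transversal_if_dim_add_less) (auto simp: V_def grass_def)
  qed
  then have "common_normal V F"
    using not_transversal_iff_common_normal[OF subspace_span sF] V_def by blast
  then show ?thesis unfolding V_def common_normal_def by (auto intro: span_base)
qed

section \<open>Measurability\<close>

lemma ex_unit_root_iff_dense:
  fixes h :: "'a::euclidean_space \<Rightarrow> real" and D :: "'a set"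
  assumes h: "continuous_on UNIV h" and D: "\<And>X. open X \<Longrightarrow> X \<noteq> {} \<Longrightarrow> \<exists>d\<in>D. d \<in> X"
  shows "(\<exists>y. norm y = 1 \<and> h y = 0) \<longleftrightarrow>
         (\<forall>m. \<exists>d\<in>D. \<bar>h d\<bar> + \<bar>norm d - 1\<bar> < inverse (real (Suc m)))"
proof -
  define g where "g y = \<bar>h y\<bar> + \<bar>norm y - 1\<bar>" for y
  have g: "isCont g y" for y
    unfolding g_def using h by (intro continuous_intros) (simp add: continuous_on_eq_continuous_at)
  have "(\<exists>y. norm y = 1 \<and> h y = 0) \<longleftrightarrow> (\<forall>m. \<exists>d\<in>D. g d < inverse (real (Suc m)))"
  proof
    assume "\<exists>y. norm y = 1 \<and> h y = 0"
    then obtain y where "norm y = 1" "h y = 0" by blast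
    then have y: "g y = 0" by (simp add: g_def)
    show "\<forall>m. \<exists>d\<in>D. g d < inverse (real (Suc m))"
    proof
      fix m
      have "inverse (real (Suc m)) > 0" by simp
      then obtain \<delta> where "\<delta> > 0" and \<delta>: "\<And>z. dist z y < \<delta> \<Longrightarrow> dist (g z) (g y) < inverse (real (Suc m))"
        using g[of y] unfolding continuous_at_eps_delta by blast
      moreover obtain d where "d \<in> D" "d \<in> ball y \<delta>"
        using D[of "ball y \<delta>"] \<open>\<delta> > 0\<close> by auto
      ultimately have "g d < inverse (real (Suc m))"
        using y by (auto simp: dist_commute dist_real_def abs_less_iff)
      with \<open>d \<in> D\<close> show "\<exists>d\<in>D. g d < inverse (real (Suc m))" ..
    qed
  next
    assume "\<forall>m. \<exists>d\<in>D. g d < inverse (real (Suc m))"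
    then obtain d where d: "\<And>m. g (d m) < inverse (real (Suc m))" by metis
    have "norm (d m) \<le> 2" for m
    proof -
      have "g (d m) < 1"
        using d[of m] by (rule less_le_trans) (simp add: inverse_le_1_iff)
      then show ?thesis unfolding g_def by arith
    qed
    then have "bounded (range d)" by (auto simp: bounded_iff)
    then obtain l r where r: "strict_mono r" and lim: "(d \<circ> r) \<longlonglongrightarrow> l"
      using bounded_imp_convergent_subsequence by blast
    have "(\<lambda>m. g (d (r m))) \<longlonglongrightarrow> g l"
      using isCont_tendsto_compose[OF g lim] by (simp add: o_def)
    moreover have "g (d (r m)) \<le> inverse (real (Suc m))" for m
    proof -
      have "inverse (real (Suc (r m))) \<le> inverse (real (Suc m))"
        using seq_suble[OF r, of m] by (intro le_imp_inverse_le) auto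
      then show ?thesis using d[of "r m"] by linarith
    qed
    ultimately have "g l \<le> 0"
      using LIMSEQ_le[OF _ LIMSEQ_inverse_real_of_nat] by blast
    then show "\<exists>y. norm y = 1 \<and> h y = 0" unfolding g_def by (intro exI[of _ l]) arith
  qed
  then show ?thesis by (simp add: g_def)
qed

lemma sets_Collect_ex_unit_root:
  fixes H :: "'w \<Rightarrow> 'a::euclidean_space \<Rightarrow> real"
  assumes cont: "\<And>w. continuous_on UNIV (H w)" and meas: "\<And>y. (\<lambda>w. H w y) \<in> borel_measurable N"
  shows "{w \<in> space N. \<exists>y. norm y = 1 \<and> H w y = 0} \<in> sets N"
proof -
  obtain D :: "'a set" where D: "countable D" "\<And>X. open X \<Longrightarrow> X \<noteq> {} \<Longrightarrow> \<exists>d\<in>D. d \<in> X"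
    using countable_dense_setE by blast
  have "{w \<in> space N. \<exists>y. norm y = 1 \<and> H w y = 0} =
      (\<Inter>m. \<Union>d\<in>D. {w \<in> space N. \<bar>H w d\<bar> + \<bar>norm d - 1\<bar> < inverse (real (Suc m))})"
    using ex_unit_root_iff_dense[OF cont D(2)] by auto
  also have "\<dots> \<in> sets N"
  proof -
    have "{w \<in> space N. \<bar>H w d\<bar> + \<bar>norm d - 1\<bar> < c} \<in> sets N" for d c
      using meas[of d] by measurable
    then show ?thesis
      using D(1) by (intro sets.countable_INT') (auto intro: sets.countable_UN'')
  qed
  finally show ?thesis .
qed

text \<open>No measurability of \<open>f\<close> is needed (and \<open>tuple_span\<close> is never shown measurable):
  the emeasure of \<open>distr M N f\<close> is at most the pulled-back emeasure in any case.\<close>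

lemma null_sets_distrI:
  assumes "A \<in> sets N" and "f -` A \<inter> space M \<subseteq> Z" and "Z \<in> null_sets M"
  shows "A \<in> null_sets (distr M N f)"
proof -
  have "emeasure (distr M N f) A \<le> emeasure M (f -` A \<inter> space M)"
    unfolding distr_def by (simp add: emeasure_measure_of_conv)
  also have "\<dots> \<le> emeasure M Z"
    using assms(2,3) by (intro emeasure_mono) auto
  finally show ?thesis
    using assms(1,3) by (simp add: null_sets_def)
qed

lemma space_grass_borel [simp]: "space (grass_borel k) = grass k"
  by (simp add: grass_borel_def)

lemma measurable_proj_mat [measurable]: "proj_mat \<in> measurable (grass_borel k) borel"
  unfolding grass_borel_def by (rule measurable_vimage_algebra1) simp

lemma borel_measurable_matrix_vector_mult [measurable]:
  "(\<lambda>A :: real^'n^'m. A *v x) \<in> borel_measurable borel"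
proof -
  have "linear (\<lambda>A :: real^'n^'m. A *v x)"
    by (intro linearI) (simp_all add: matrix_vector_mult_add_rdistrib scaleR_matrix_vector_assoc)
  then show ?thesis
    by (intro borel_measurable_continuous_onI linear_continuous_on linear_conv_bounded_linear[THEN iffD1])
qed

lemma sets_pair_common_normal:
  fixes H :: "'w \<Rightarrow> real^'n \<Rightarrow> real" and \<mu> :: "(real^'n) set measure"
  assumes sets_\<mu>: "sets \<mu> = sets (grass_borel b)"
    and cont: "\<And>w. continuous_on UNIV (H w)" and meas: "\<And>y. (\<lambda>w. H w y) \<in> borel_measurable N"
  shows "{p \<in> space (N \<Otimes>\<^sub>M \<mu>). \<exists>y. norm y = 1 \<and> H (fst p) y = 0 \<and> (\<forall>f\<in>snd p. f \<bullet> y = 0)}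
           \<in> sets (N \<Otimes>\<^sub>M \<mu>)"
proof -
  have space_\<mu>: "space \<mu> = grass b"
    using sets_eq_imp_space_eq[OF sets_\<mu>] by simp
  have "{p \<in> space (N \<Otimes>\<^sub>M \<mu>). \<exists>y. norm y = 1 \<and> H (fst p) y = 0 \<and> (\<forall>f\<in>snd p. f \<bullet> y = 0)} =
      {p \<in> space (N \<Otimes>\<^sub>M \<mu>). \<exists>y. norm y = 1 \<and> \<bar>H (fst p) y\<bar> + norm (proj_mat (snd p) *v y) = 0}"
    by (auto simp: space_pair_measure space_\<mu> grass_def proj_mat_mult_vec_eq_0_iff add_nonneg_eq_0_iff)
  also have "\<dots> \<in> sets (N \<Otimes>\<^sub>M \<mu>)"
  proof (rule sets_Collect_ex_unit_root)
    show "continuous_on UNIV (\<lambda>y. \<bar>H (fst p) y\<bar> + norm (proj_mat (snd p) *v y))" for p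
      using cont by (intro continuous_intros) auto
    have [measurable]: "proj_mat \<in> measurable \<mu> borel"
      unfolding measurable_cong_sets[OF sets_\<mu> refl] by (rule measurable_proj_mat)
    show "(\<lambda>p. \<bar>H (fst p) y\<bar> + norm (proj_mat (snd p) *v y)) \<in> borel_measurable (N \<Otimes>\<^sub>M \<mu>)" for y
      using meas by measurable
  qed
  finally show ?thesis .
qed

lemma sets_grass_borel_nontransversal_positive:
  fixes \<mu> :: "(real^'n) set measure"
  assumes "sigma_finite_measure \<mu>" and sets_\<mu>: "sets \<mu> = sets (grass_borel b)"
  shows "{E \<in> grass a. 0 < emeasure \<mu> {F \<in> grass b. \<not> transversal E F}} \<in> sets (grass_borel a)"
proof -
  interpret \<mu>: sigma_finite_measure \<mu> by fact
  define Q where "Q = {p \<in> space (grass_borel a \<Otimes>\<^sub>M \<mu>).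
      \<exists>y. norm y = 1 \<and> norm (proj_mat (fst p) *v y) = 0 \<and> (\<forall>f\<in>snd p. f \<bullet> y = 0)}"
  have Q: "Q \<in> sets (grass_borel a \<Otimes>\<^sub>M \<mu>)"
    unfolding Q_def using sets_\<mu> by (rule sets_pair_common_normal) (intro continuous_intros, measurable)
  have sections: "Pair E -` Q = {F \<in> grass b. \<not> transversal E F}" if E: "E \<in> grass a" for E
  proof -
    have space_\<mu>: "space \<mu> = grass b"
      using sets_eq_imp_space_eq[OF sets_\<mu>] by simp
    have "(E, F) \<in> Q \<longleftrightarrow> \<not> transversal E F" if "F \<in> grass b" for F
      using E that not_transversal_iff_common_normal[of E F]
      by (auto simp: common_normal_def Q_def space_pair_measure space_\<mu> grass_def proj_mat_mult_vec_eq_0_iff)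
    moreover have "(E, F) \<in> Q \<Longrightarrow> F \<in> grass b" for F
      by (simp add: Q_def space_pair_measure space_\<mu>)
    ultimately show ?thesis by blast
  qed
  then have "{E \<in> grass a. 0 < emeasure \<mu> {F \<in> grass b. \<not> transversal E F}} =
      {E \<in> space (grass_borel a). 0 < emeasure \<mu> (Pair E -` Q)}"
    by auto
  also have "\<dots> \<in> sets (grass_borel a)"
    using \<mu>.measurable_emeasure_Pair[OF Q] by measurable
  finally show ?thesis .
qed

section \<open>Tuples of vectors with a common unit normal\<close>

definition tuples_with_normal_in :: "nat \<Rightarrow> 'a::real_inner set \<Rightarrow> (nat \<Rightarrow> 'a) set" where
  "tuples_with_normal_in k G = {v. \<exists>u\<in>G. norm u = 1 \<and> (\<forall>i<k. v i \<bullet> u = 0)}"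

lemma tuples_with_normal_in_SucD:
  assumes "v(k := y) \<in> tuples_with_normal_in (Suc k) G"
  shows "v \<in> tuples_with_normal_in k {u \<in> G. y \<bullet> u = 0}"
proof -
  obtain u where "u \<in> G" "norm u = 1" and u: "\<forall>i<Suc k. (v(k := y)) i \<bullet> u = 0"
    using assms by (auto simp: tuples_with_normal_in_def)
  moreover have "y \<bullet> u = 0" using u by auto
  moreover have "v i \<bullet> u = 0" if "i < k" for i
    using u[rule_format, of i] that by simp
  ultimately show ?thesis by (auto simp: tuples_with_normal_in_def)
qed

lemma dim_subspace_inter_hyperplane_less:
  fixes G :: "'a::euclidean_space set"
  assumes G: "subspace G" and "u \<in> G" and "y \<bullet> u \<noteq> 0"
  shows "dim {u \<in> G. y \<bullet> u = 0} < dim G"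
proof -
  have "subspace {u \<in> G. y \<bullet> u = 0}"
    using subspace_inter[OF G subspace_hyperplane[of y]] by (simp add: Int_def)
  moreover have "{u \<in> G. y \<bullet> u = 0} \<subset> G" using assms by auto
  ultimately show ?thesis
    using G by (intro dim_psubset) (simp add: span_eq_iff[THEN iffD2])
qed

locale hyperplane_null_measure = sigma_finite_measure M for M :: "'a::euclidean_space measure" +
  assumes sets_eq_borel: "sets M = sets borel"
    and hyperplane_null: "u \<noteq> 0 \<Longrightarrow> {x. u \<bullet> x = 0} \<in> null_sets M"
begin

sublocale product_sigma_finite "\<lambda>_. M"
  by (simp add: product_sigma_finite_def sigma_finite_measure_axioms)

lemma sigma_finite_tuples: "sigma_finite_measure (PiM {..<k::nat} (\<lambda>_. M))"
proof -
  interpret finite_product_sigma_finite "\<lambda>_. M" "{..<k}"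
    by unfold_locales simp
  show ?thesis ..
qed

lemma sets_tuples_with_normal_in:
  assumes G: "subspace G"
  shows "tuples_with_normal_in k G \<inter> space (PiM {..<k} (\<lambda>_. M)) \<in> sets (PiM {..<k} (\<lambda>_. M))"
proof -
  have "tuples_with_normal_in k G \<inter> space (PiM {..<k} (\<lambda>_. M)) =
      {v \<in> space (PiM {..<k} (\<lambda>_. M)). \<exists>u. norm u = 1 \<and> (\<Sum>i<k. \<bar>v i \<bullet> u\<bar>) + infdist u G = 0}"
    using in_closed_iff_infdist_zero[OF closed_subspace[OF G]] subspace_0[OF G]
    by (auto simp: tuples_with_normal_in_def add_nonneg_eq_0_iff sum_nonneg sum_nonneg_eq_0_iff infdist_nonneg)
  also have "\<dots> \<in> sets (PiM {..<k} (\<lambda>_. M))"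
  proof (rule sets_Collect_ex_unit_root)
    show "continuous_on UNIV (\<lambda>u. (\<Sum>i<k. \<bar>v i \<bullet> u\<bar>) + infdist u G)" for v
      by (intro continuous_intros)
    have [measurable]: "(\<lambda>x. x \<bullet> u) \<in> borel_measurable M" for u :: 'a
      unfolding measurable_cong_sets[OF sets_eq_borel refl] by measurable
    show "(\<lambda>v. (\<Sum>i<k. \<bar>v i \<bullet> u\<bar>) + infdist u G) \<in> borel_measurable (PiM {..<k} (\<lambda>_. M))" for u
      by measurable
  qed
  finally show ?thesis .
qed

lemma tuples_with_normal_in_null:
  "subspace G \<Longrightarrow> dim G \<le> k \<Longrightarrow>
    tuples_with_normal_in k G \<inter> space (PiM {..<k} (\<lambda>_. M)) \<in> null_sets (PiM {..<k} (\<lambda>_. M))"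
proof (induction k arbitrary: G)
  case 0
  then have "tuples_with_normal_in 0 G = {}"
    using dim_eq_0[of G] by (auto simp: tuples_with_normal_in_def)
  then show ?case by simp
next
  case (Suc k)
  show ?case
  proof (cases "G \<subseteq> {0}")
    case True
    then have "tuples_with_normal_in (Suc k) G = {}" by (auto simp: tuples_with_normal_in_def)
    then show ?thesis by simp
  next
    case False
    then obtain u where u: "u \<in> G" "u \<noteq> 0" by blast
    define T where "T = tuples_with_normal_in (Suc k) G \<inter> space (PiM {..<Suc k} (\<lambda>_. M))"
    have T: "T \<in> sets (PiM (insert k {..<k}) (\<lambda>_. M))"
      using sets_tuples_with_normal_in[OF Suc.prems(1), of "Suc k"] by (simp only: T_def lessThan_Suc)
    \<comment> \<open>Fubini over the last vector \<open>y\<close>: off the null hyperplane orthogonal to \<open>u\<close>, a unit normal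
      in \<open>G\<close> of the whole tuple is one in the smaller space \<open>G \<inter> y\<^sup>\<bottom>\<close> of the first \<open>k\<close> vectors.\<close>
    have section_null: "(\<integral>\<^sup>+x. indicator T (x(k := y)) \<partial>PiM {..<k} (\<lambda>_. M)) = 0" if "y \<bullet> u \<noteq> 0" for y
    proof -
      let ?G = "{u \<in> G. y \<bullet> u = 0}"
      have "?G = G \<inter> {u. y \<bullet> u = 0}" by auto
      then have "subspace ?G" using subspace_inter[OF Suc.prems(1) subspace_hyperplane] by simp
      moreover have "dim ?G \<le> k"
        using dim_subspace_inter_hyperplane_less[OF Suc.prems(1) u(1) that] Suc.prems(2) by simp
      ultimately have N: "tuples_with_normal_in k ?G \<inter> space (PiM {..<k} (\<lambda>_. M)) \<in> null_sets (PiM {..<k} (\<lambda>_. M))"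
        by (rule Suc.IH)
      have "(\<integral>\<^sup>+x. indicator T (x(k := y)) \<partial>PiM {..<k} (\<lambda>_. M)) \<le>
          (\<integral>\<^sup>+x. indicator (tuples_with_normal_in k ?G \<inter> space (PiM {..<k} (\<lambda>_. M))) x \<partial>PiM {..<k} (\<lambda>_. M))"
        by (intro nn_integral_mono) (auto simp: T_def indicator_def dest: tuples_with_normal_in_SucD)
      also have "\<dots> = 0" using N by (simp add: null_setsD1 null_setsD2)
      finally show ?thesis by simp
    qed
    have "emeasure (PiM {..<Suc k} (\<lambda>_. M)) T = (\<integral>\<^sup>+v. indicator T v \<partial>PiM (insert k {..<k}) (\<lambda>_. M))"
      using T by (simp add: lessThan_Suc)
    also have "\<dots> = (\<integral>\<^sup>+y. \<integral>\<^sup>+x. indicator T (x(k := y)) \<partial>PiM {..<k} (\<lambda>_. M) \<partial>M)"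
      using T by (intro product_nn_integral_insert_rev) auto
    also have "\<dots> = (\<integral>\<^sup>+y. 0 \<partial>M)"
      using hyperplane_null[OF u(2)] section_null
      by (intro nn_integral_cong_AE) (auto elim!: AE_I' simp: inner_commute)
    finally show ?thesis
      using T by (simp add: T_def null_sets_def lessThan_Suc)
  qed
qed


lemma AE_no_common_normal_with:
  assumes F: "subspace F" and dim: "DIM('a) \<le> a + dim F"
  shows "AE v in PiM {..<a} (\<lambda>_. M). \<not> common_normal (v ` {..<a}) F"
proof -
  define G where "G = {y. \<forall>f\<in>F. orthogonal f y}"
  have "subspace G" unfolding G_def by (rule subspace_orthogonal_to_vectors)
  moreover have "dim G \<le> a"
  proof -
    have "dim {y \<in> UNIV. \<forall>x\<in>F. orthogonal x y} + dim F = dim (UNIV :: 'a set)"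
      by (rule dim_subspace_orthogonal_to_vectors[OF F subspace_UNIV subset_UNIV])
    then show ?thesis using dim by (simp add: G_def)
  qed
  ultimately have "tuples_with_normal_in a G \<inter> space (PiM {..<a} (\<lambda>_. M)) \<in> null_sets (PiM {..<a} (\<lambda>_. M))"
    by (rule tuples_with_normal_in_null)
  then show ?thesis
    by (rule AE_I') (auto simp: common_normal_def tuples_with_normal_in_def G_def orthogonal_def)
qed

end

section \<open>Gaussian tuples and the Grassmannian\<close>

lemma hyperplane_null_measure_gauss_vec: "hyperplane_null_measure (gauss_vec :: (real^'n) measure)"
proof -
  have dens: "(\<lambda>x::real^'n. ennreal (\<Prod>i\<in>UNIV. std_normal_density (x $ i))) \<in> borel_measurable borel"
    by measurable
  have "sigma_finite_measure (gauss_vec :: (real^'n) measure)"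
    unfolding gauss_vec_def using dens
    by (subst sigma_finite_measure.sigma_finite_iff_density_finite'[OF sigma_finite_lborel]) auto
  moreover have "{x. u \<bullet> x = 0} \<in> null_sets gauss_vec" if "u \<noteq> 0" for u :: "real^'n"
  proof -
    have "{x. u \<bullet> x = 0} \<in> null_sets lborel"
      using that negligible_hyperplane[of u 0] closed_hyperplane[of u 0]
      by (simp add: negligible_iff_null_sets null_sets_completion_iff borel_closed)
    then show ?thesis
      unfolding gauss_vec_def using dens
      by (subst null_sets_density_iff) (auto intro: AE_mp[OF AE_not_in])
  qed
  ultimately show ?thesis
    by (simp add: hyperplane_null_measure_def hyperplane_null_measure_axioms_def gauss_vec_def)
qed

lemma AE_no_common_normal:
  fixes M :: "(real^'n) measure" and \<mu> :: "(real^'n) set measure"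
  assumes "hyperplane_null_measure M" and "sigma_finite_measure \<mu>"
    and sets_\<mu>: "sets \<mu> = sets (grass_borel b)" and dim: "CARD('n) \<le> a + b"
  shows "AE v in PiM {..<a} (\<lambda>_. M). AE F in \<mu>. \<not> common_normal (v ` {..<a}) F"
proof -
  interpret M: hyperplane_null_measure M by fact
  interpret \<mu>: sigma_finite_measure \<mu> by fact
  interpret pair_sigma_finite "PiM {..<a} (\<lambda>_. M)" \<mu>
    by (intro pair_sigma_finite.intro M.sigma_finite_tuples assms(2))
  have "{p \<in> space (PiM {..<a} (\<lambda>_. M) \<Otimes>\<^sub>M \<mu>).
      \<exists>y. norm y = 1 \<and> (\<Sum>i<a. \<bar>fst p i \<bullet> y\<bar>) = 0 \<and> (\<forall>f\<in>snd p. f \<bullet> y = 0)}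
      \<in> sets (PiM {..<a} (\<lambda>_. M) \<Otimes>\<^sub>M \<mu>)"
  proof (rule sets_pair_common_normal[OF sets_\<mu>])
    have [measurable]: "(\<lambda>x. x \<bullet> y) \<in> borel_measurable M" for y :: "real^'n"
      unfolding measurable_cong_sets[OF M.sets_eq_borel refl] by measurable
    show "(\<lambda>v. \<Sum>i<a. \<bar>v i \<bullet> y\<bar>) \<in> borel_measurable (PiM {..<a} (\<lambda>_. M))" for y
      by measurable
  qed (intro continuous_intros)
  moreover have "(\<Sum>i<a. \<bar>v i \<bullet> y\<bar>) = 0 \<longleftrightarrow> (\<forall>x\<in>v ` {..<a}. x \<bullet> y = 0)"
    for v :: "nat \<Rightarrow> real^'n" and y
    by (auto simp: sum_nonneg_eq_0_iff)
  ultimately have Q: "{p \<in> space (PiM {..<a} (\<lambda>_. M) \<Otimes>\<^sub>M \<mu>).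
      \<not> \<not> common_normal (fst p ` {..<a}) (snd p)} \<in> sets (PiM {..<a} (\<lambda>_. M) \<Otimes>\<^sub>M \<mu>)"
    unfolding common_normal_def by simp
  have "AE F in \<mu>. AE v in PiM {..<a} (\<lambda>_. M). \<not> common_normal (v ` {..<a}) F"
  proof (rule AE_I2)
    fix F assume "F \<in> space \<mu>"
    then have "subspace F" "dim F = b"
      using sets_eq_imp_space_eq[OF sets_\<mu>] by (simp_all add: grass_def)
    then show "AE v in PiM {..<a} (\<lambda>_. M). \<not> common_normal (v ` {..<a}) F"
      using dim by (intro M.AE_no_common_normal_with) simp_all
  qed
  then show ?thesis
    using AE_commute[OF sets.sets_Collect_neg[OF Q]] by simp
qed

lemma AE_tuple_span_nontransversal_null:
  fixes M :: "(real^'n) measure" and \<mu> :: "(real^'n) set measure"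
  assumes "hyperplane_null_measure M" and "sigma_finite_measure \<mu>"
    and sets_\<mu>: "sets \<mu> = sets (grass_borel b)" and dim: "CARD('n) = a + b"
  shows "AE v in PiM {..<a} (\<lambda>_. M). emeasure \<mu> {F \<in> grass b. \<not> transversal (tuple_span a v) F} = 0"
proof -
  have "AE v in PiM {..<a} (\<lambda>_. M). AE F in \<mu>. \<not> common_normal (v ` {..<a}) F"
    using dim by (intro AE_no_common_normal[OF assms(1-3)]) simp
  then show ?thesis
  proof (rule eventually_mono)
    fix v assume "AE F in \<mu>. \<not> common_normal (v ` {..<a}) F"
    then obtain Z where Z: "\<And>F. F \<in> space \<mu> - Z \<Longrightarrow> \<not> common_normal (v ` {..<a}) F"
      and Z_null: "Z \<in> null_sets \<mu>"
      by (elim AE_E3) blast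
    have "{F \<in> grass b. \<not> transversal (tuple_span a v) F} \<subseteq> Z"
      using Z tuple_span_not_transversal_imp_common_normal[of a b _ v] dim sets_eq_imp_space_eq[OF sets_\<mu>]
      by auto
    then have "emeasure \<mu> {F \<in> grass b. \<not> transversal (tuple_span a v) F} \<le> emeasure \<mu> Z"
      using Z_null by (intro emeasure_mono) auto
    then show "emeasure \<mu> {F \<in> grass b. \<not> transversal (tuple_span a v) F} = 0"
      using Z_null by (simp add: null_setsD1)
  qed
qed

theorem lemma5p2:
  fixes a b :: nat and \<mu> :: "(real^'n) set measure"
  assumes "a \<ge> 1" and "b \<ge> 1" and "CARD('n) = a + b"
    and "finite_measure \<mu>" and "sets \<mu> = sets (grass_borel b)"
  shows "{E \<in> grass a. emeasure \<mu> {F \<in> grass b. \<not> transversal E F} > 0}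
           \<in> null_sets (grass_measure a :: (real^'n) set measure)"
proof -
  let ?S = "{E \<in> grass a. emeasure \<mu> {F \<in> grass b. \<not> transversal E F} > 0}"
  let ?P = "PiM {..<a} (\<lambda>_. gauss_vec :: (real^'n) measure)"
  interpret \<mu>: finite_measure \<mu> by fact
  have "AE v in ?P. emeasure \<mu> {F \<in> grass b. \<not> transversal (tuple_span a v) F} = 0"
    using hyperplane_null_measure_gauss_vec \<mu>.sigma_finite_measure_axioms assms(5,3)
    by (rule AE_tuple_span_nontransversal_null)
  then obtain N where N: "\<And>v. v \<in> space ?P - N \<Longrightarrow>
      emeasure \<mu> {F \<in> grass b. \<not> transversal (tuple_span a v) F} = 0"
    and N_null: "N \<in> null_sets ?P"
    by (elim AE_E3) blast
  have "tuple_span a -` ?S \<inter> space ?P \<subseteq> N"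
    using N by force
  moreover have "?S \<in> sets (grass_borel a)"
    using \<mu>.sigma_finite_measure_axioms assms(5) by (rule sets_grass_borel_nontransversal_positive)
  ultimately show ?thesis
    unfolding grass_measure_def using N_null by (intro null_sets_distrI) auto
qed

end
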